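(* Let $n\geq 3$ and let $f(\overleftrightarrow{K}_{n})$ be the smallest integer such that every arc-colored complete digraph $\overleftrightarrow{K}_{n}$ with $c(\overleftrightarrow{K}_{n})\geq f(\overleftrightarrow{K}_{n})$ contains a rainbow triangle. Then \[f(\overleftrightarrow{K}_{n})=\begin{cases} \lfloor\frac{n^{2}}{4}\rfloor+3,&\text{if } n=3, 4;\\ \lfloor\frac{n^{2}}{4}\rfloor+2,&\text{if } n\geq 5. \end{cases}\]
   Context: All digraphs are finite, without loops or multiple arcs (a pair of opposite arcs $xy,yx$ is allowed). The complete digraph $\overleftrightarrow{K}_{n}$ is obtained from $K_n$ by replacing each edge $xy$ by the two arcs $xy$ and $yx$. An arc-coloring of a digraph $D$ is any map $C:A(D)\to\mathbb{N}$; $c(D)$ denotes the number of distinct colors used on the arcs of $D$. A rainbow triangle is a directed triangle (directed cycle of length 3) whose three arcs have pairwise distinct colors. *)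

theory Defs
  imports Main
begin

definition arcs :: "nat \<Rightarrow> (nat \<times> nat) set" where
  "arcs n = {(x, y). x < n \<and> y < n \<and> x \<noteq> y}"

definition num_colors :: "nat \<Rightarrow> (nat \<times> nat \<Rightarrow> nat) \<Rightarrow> nat" where
  "num_colors n C = card (C ` arcs n)"

definition has_rainbow_triangle :: "nat \<Rightarrow> (nat \<times> nat \<Rightarrow> nat) \<Rightarrow> bool" where
  "has_rainbow_triangle n C \<longleftrightarrow>
     (\<exists>x y z. x < n \<and> y < n \<and> z < n \<and> x \<noteq> y \<and> y \<noteq> z \<and> z \<noteq> x \<and>
        C (x, y) \<noteq> C (y, z) \<and> C (y, z) \<noteq> C (z, x) \<and> C (z, x) \<noteq> C (x, y))"

definition f_rainbow :: "nat \<Rightarrow> nat" where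
  "f_rainbow n = (LEAST k. \<forall>C :: nat \<times> nat \<Rightarrow> nat. num_colors n C \<ge> k \<longrightarrow> has_rainbow_triangle n C)"

end

(*
  Call a colour private to a vertex v if every arc of that colour is incident with v; deleting v
  loses exactly the private colours of v. In a colouring without rainbow triangles on n >= 4
  vertices some vertex has at most n div 2 private colours: private colours on both in- and
  out-arcs of v leave at most two of them, and if they all sit on out-arcs v -> y, then every arc
  y -> s has the colour of s -> v, which leaves the heads y few private colours of their own.
  As (n - 1)^2 div 4 + n div 2 = n^2 div 4, induction from the triangle (at most 4 colours) gives
  n^2 div 4 + 2 colours, and induction from five vertices gives n^2 div 4 + 1 for n >= 5.

  On five vertices, 8 colours would leave every vertex at most two private colours, so every
  triple would carry 4 colours and the out-arcs at each vertex would have distinct colours. Then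
  every arc x -> y continues monochromatically to some y -> z, each colour class has at least
  three arcs, and the 20 arcs carry at most 6 colours.

  The matching lower bounds colour the arcs from one half of the vertices to the other half with
  distinct colours and all remaining arcs alike, with special colourings for n = 3 and n = 4.
*)

theory Submission
  imports Defs
begin

lemma card_le_length_if_subset_set: "A \<subseteq> set xs \<Longrightarrow> card A \<le> length xs"
  by (meson List.finite_set card_length card_mono le_trans)

definition arcs_on :: "'a set \<Rightarrow> ('a \<times> 'a) set" where
  "arcs_on V = {(x, y). x \<in> V \<and> y \<in> V \<and> x \<noteq> y}"

definition rainbow_free :: "'a set \<Rightarrow> ('a \<times> 'a \<Rightarrow> 'c) \<Rightarrow> bool" where
  "rainbow_free V C \<longleftrightarrow> (\<forall>x\<in>V. \<forall>y\<in>V. \<forall>z\<in>V. x \<noteq> y \<longrightarrow> y \<noteq> z \<longrightarrow> z \<noteq> x \<longrightarrow>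
      C (x, y) = C (y, z) \<or> C (y, z) = C (z, x) \<or> C (z, x) = C (x, y))"

lemma arcs_on_eq_Sigma: "arcs_on V = Sigma V (\<lambda>x. V - {x})"
  by (auto simp: arcs_on_def)

lemma finite_arcs_on: "finite V \<Longrightarrow> finite (arcs_on V)"
  by (simp add: arcs_on_eq_Sigma)

lemma card_arcs_on: "finite V \<Longrightarrow> card (arcs_on V) = card V * (card V - 1)"
  by (simp add: arcs_on_eq_Sigma)

lemma rainbow_freeD:
  "rainbow_free V C \<Longrightarrow> x \<in> V \<Longrightarrow> y \<in> V \<Longrightarrow> z \<in> V \<Longrightarrow> x \<noteq> y \<Longrightarrow> y \<noteq> z \<Longrightarrow> z \<noteq> x \<Longrightarrow>
    C (x, y) = C (y, z) \<or> C (y, z) = C (z, x) \<or> C (z, x) = C (x, y)"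
  unfolding rainbow_free_def by blast

lemma rainbow_free_subset: "rainbow_free V C \<Longrightarrow> W \<subseteq> V \<Longrightarrow> rainbow_free W C"
  unfolding rainbow_free_def by blast

lemma rainbow_free_swap:
  assumes "rainbow_free V C"
  shows "rainbow_free V (C \<circ> prod.swap)"
  unfolding rainbow_free_def comp_def swap_simp
proof (intro ballI impI)
  fix x y z assume "x \<in> V" "y \<in> V" "z \<in> V" "x \<noteq> y" "y \<noteq> z" "z \<noteq> x"
  then show "C (y, x) = C (z, y) \<or> C (z, y) = C (x, z) \<or> C (x, z) = C (y, x)"
    using rainbow_freeD[OF assms, of x z y] by auto
qed

lemma image_swap_arcs_on: "(C \<circ> prod.swap) ` arcs_on V = C ` arcs_on V"
proof -
  have "prod.swap ` arcs_on V = arcs_on V"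
    by (auto simp: arcs_on_def image_iff)
  then show ?thesis
    by (metis image_comp)
qed

section \<open>Private colours\<close>

definition private_colors :: "'a set \<Rightarrow> ('a \<times> 'a \<Rightarrow> 'c) \<Rightarrow> 'a \<Rightarrow> 'c set" where
  "private_colors V C v =
     {c \<in> C ` arcs_on V. \<forall>x y. (x, y) \<in> arcs_on V \<longrightarrow> C (x, y) = c \<longrightarrow> x = v \<or> y = v}"

lemma private_colors_swap: "private_colors V (C \<circ> prod.swap) v = private_colors V C v"
  unfolding private_colors_def image_swap_arcs_on by (auto simp: arcs_on_def)

lemma card_colors_le_delete_vertex:
  assumes "finite V"
  shows "card (C ` arcs_on V) \<le> card (C ` arcs_on (V - {v})) + card (private_colors V C v)"
proof -
  have "C ` arcs_on V \<subseteq> C ` arcs_on (V - {v}) \<union> private_colors V C v"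
  proof
    fix c assume c: "c \<in> C ` arcs_on V"
    show "c \<in> C ` arcs_on (V - {v}) \<union> private_colors V C v"
    proof (cases "c \<in> private_colors V C v")
      case False
      then obtain x y where "(x, y) \<in> arcs_on V" "C (x, y) = c" "x \<noteq> v" "y \<noteq> v"
        using c unfolding private_colors_def by blast
      then show ?thesis
        by (force simp: arcs_on_def)
    qed simp
  qed
  then have "card (C ` arcs_on V) \<le> card (C ` arcs_on (V - {v}) \<union> private_colors V C v)"
    by (intro card_mono) (auto simp: private_colors_def assms finite_arcs_on)
  also have "\<dots> \<le> card (C ` arcs_on (V - {v})) + card (private_colors V C v)"
    by (rule card_Un_le)
  finally show ?thesis .
qed

lemma private_colorD:
  "c \<in> private_colors V C v \<Longrightarrow> (x, y) \<in> arcs_on V \<Longrightarrow> C (x, y) = c \<Longrightarrow> x = v \<or> y = v"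
  unfolding private_colors_def by blast

lemma private_colorE:
  assumes "c \<in> private_colors V C v"
  obtains (out) y where "(v, y) \<in> arcs_on V" "C (v, y) = c"
    | (into) x where "(x, v) \<in> arcs_on V" "C (x, v) = c"
  using assms unfolding private_colors_def by auto

text \<open>The third side \<open>y \<rightarrow> x\<close> of the triangle \<open>v \<rightarrow> y \<rightarrow> x \<rightarrow> v\<close> avoids \<open>v\<close>, so its colour
  differs from both private colours, which must therefore coincide.\<close>
lemma private_out_in_eq:
  assumes rf: "rainbow_free V C"
    and out: "(v, y) \<in> arcs_on V" "C (v, y) \<in> private_colors V C v"
    and into: "(x, v) \<in> arcs_on V" "C (x, v) \<in> private_colors V C v"
    and "x \<noteq> y"
  shows "C (v, y) = C (x, v)"
proof -
  have V: "v \<in> V" "y \<in> V" "x \<in> V" "v \<noteq> y" "x \<noteq> v"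
    using out into by (auto simp: arcs_on_def)
  have yx: "(y, x) \<in> arcs_on V"
    using V \<open>x \<noteq> y\<close> by (auto simp: arcs_on_def)
  have "C (y, x) \<noteq> C (v, y)" "C (y, x) \<noteq> C (x, v)"
    using private_colorD[OF out(2) yx] private_colorD[OF into(2) yx] V \<open>x \<noteq> y\<close> by auto
  then show ?thesis
    using rainbow_freeD[OF rf V(1-3)] V \<open>x \<noteq> y\<close> by auto
qed

lemma card_private_colors_le_2_if_in_and_out:
  assumes rf: "rainbow_free V C"
    and vy: "(v, y) \<in> arcs_on V" "C (v, y) \<in> private_colors V C v"
    and xv: "(x, v) \<in> arcs_on V" "C (x, v) \<in> private_colors V C v"
  shows "card (private_colors V C v) \<le> 2"
proof -
  let ?Q = "private_colors V C v"
  have Q: "?Q \<subseteq> {C (x, v), C (v, x), C (v, y), C (y, v)}"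
  proof
    fix c assume c: "c \<in> ?Q"
    then show "c \<in> {C (x, v), C (v, x), C (v, y), C (y, v)}"
    proof (cases rule: private_colorE)
      case (out s)
      then have "s \<noteq> x \<Longrightarrow> C (v, s) = C (x, v)"
        using private_out_in_eq[OF rf _ _ xv] c by blast
      then show ?thesis
        using out by (cases "s = x") auto
    next
      case (into t)
      then have "t \<noteq> y \<Longrightarrow> C (v, y) = C (t, v)"
        using private_out_in_eq[OF rf vy] c by blast
      then show ?thesis
        using into by (cases "t = y") auto
    qed
  qed
  show ?thesis
  proof (cases "x = y")
    case True
    then have "?Q \<subseteq> set [C (x, v), C (v, x)]"
      using Q by auto
    from card_le_length_if_subset_set[OF this] show ?thesis
      by simp
  next
    case False
    have xy: "C (v, y) = C (x, v)"
      using private_out_in_eq[OF rf vy xv False] .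
    have "C (v, x) = C (y, v)" if "C (v, x) \<in> ?Q" "C (y, v) \<in> ?Q"
      using private_out_in_eq[OF rf _ that(1) _ that(2)] vy xv False by (auto simp: arcs_on_def)
    then obtain b where "?Q \<subseteq> set [C (x, v), b]"
      using Q xy by auto
    from card_le_length_if_subset_set[OF this] show ?thesis
      by simp
  qed
qed

definition private_out_only :: "'a set \<Rightarrow> ('a \<times> 'a \<Rightarrow> 'c) \<Rightarrow> 'a \<Rightarrow> bool" where
  "private_out_only V C v \<longleftrightarrow> (\<forall>x. (x, v) \<in> arcs_on V \<longrightarrow> C (x, v) \<notin> private_colors V C v)"

definition private_targets :: "'a set \<Rightarrow> ('a \<times> 'a \<Rightarrow> 'c) \<Rightarrow> 'a \<Rightarrow> 'a set" where
  "private_targets V C v = {y \<in> V - {v}. C (v, y) \<in> private_colors V C v}"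

lemma private_out_only_or_swap:
  assumes rf: "rainbow_free V C" and "3 \<le> card (private_colors V C v)"
  shows "private_out_only V C v \<or> private_out_only V (C \<circ> prod.swap) v"
proof (rule ccontr)
  assume "\<not> ?thesis"
  then obtain x y where "(x, v) \<in> arcs_on V" "C (x, v) \<in> private_colors V C v"
      "(y, v) \<in> arcs_on V" "C (v, y) \<in> private_colors V C v"
    unfolding private_out_only_def private_colors_swap by auto
  moreover have "(v, y) \<in> arcs_on V"
    using \<open>(y, v) \<in> arcs_on V\<close> by (auto simp: arcs_on_def)
  ultimately show False
    using card_private_colors_le_2_if_in_and_out[OF rf] assms(2) by fastforce
qed

text \<open>In the triangle \<open>v \<rightarrow> y \<rightarrow> z \<rightarrow> v\<close> the private colour of \<open>v \<rightarrow> y\<close> differs from the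
  colours of the other two sides.\<close>
lemma color_from_private_target:
  assumes rf: "rainbow_free V C" and out_only: "private_out_only V C v" and v: "v \<in> V"
    and y: "y \<in> private_targets V C v" and z: "z \<in> V" "z \<noteq> v" "z \<noteq> y"
  shows "C (y, z) = C (z, v)"
proof -
  have Y: "y \<in> V" "y \<noteq> v" "C (v, y) \<in> private_colors V C v"
    using y by (auto simp: private_targets_def)
  have "(y, z) \<in> arcs_on V" "(z, v) \<in> arcs_on V"
    using Y z v by (auto simp: arcs_on_def)
  then have "C (y, z) \<noteq> C (v, y)" "C (z, v) \<noteq> C (v, y)"
    using private_colorD[OF Y(3)] out_only Y z unfolding private_out_only_def by (blast, metis)
  then show ?thesis
    using rainbow_freeD[OF rf v Y(1) z(1)] Y z by metis
qed

lemma private_colors_subset_targets: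
  assumes "private_out_only V C v"
  shows "private_colors V C v \<subseteq> (\<lambda>y. C (v, y)) ` private_targets V C v"
proof
  fix c assume c: "c \<in> private_colors V C v"
  then show "c \<in> (\<lambda>y. C (v, y)) ` private_targets V C v"
  proof (cases rule: private_colorE)
    case (out y)
    then show ?thesis
      using c by (auto simp: private_targets_def arcs_on_def)
  next
    case (into x)
    then show ?thesis
      using c assms unfolding private_out_only_def by blast
  qed
qed

lemma card_private_colors_le_targets:
  "finite V \<Longrightarrow> private_out_only V C v \<Longrightarrow> card (private_colors V C v) \<le> card (private_targets V C v)"
  by (rule surj_card_le[OF _ private_colors_subset_targets]) (auto simp: private_targets_def)

text \<open>By \<open>color_from_private_target\<close> every out-arc \<open>y \<rightarrow> s\<close> with \<open>s \<noteq> v\<close> has the colour of \<open>s \<rightarrow> v\<close>,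
  and every in-arc from another target has the colour of \<open>y \<rightarrow> v\<close>.\<close>
lemma private_colors_of_target_le_2_or_from_non_targets:
  assumes rf: "rainbow_free V C" and out_only: "private_out_only V C v" and v: "v \<in> V"
    and y: "y \<in> private_targets V C v"
  shows "card (private_colors V C y) \<le> 2 \<or>
    private_colors V C y \<subseteq> (\<lambda>t. C (t, y)) ` (V - private_targets V C v)"
proof -
  let ?Q = "private_colors V C y" and ?T = "private_targets V C v"
  have Y: "y \<in> V" "y \<noteq> v"
    using y by (auto simp: private_targets_def)
  have yv: "(y, v) \<in> arcs_on V"
    using Y v by (auto simp: arcs_on_def)
  have out_private: "s = v" if "(y, s) \<in> arcs_on V" "C (y, s) \<in> ?Q" for s
  proof (rule ccontr)
    assume "s \<noteq> v"
    then have "C (y, s) = C (s, v)" "(s, v) \<in> arcs_on V"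
      using color_from_private_target[OF rf out_only v y, of s] that(1) v
      by (auto simp: arcs_on_def)
    then show False
      using private_colorD[OF that(2)] \<open>s \<noteq> v\<close> Y(2) that(1) by (auto simp: arcs_on_def)
  qed
  show ?thesis
  proof (cases "C (y, v) \<in> ?Q")
    case True
    show ?thesis
    proof (cases "\<exists>t. (t, y) \<in> arcs_on V \<and> C (t, y) \<in> ?Q")
      case True
      then show ?thesis
        using card_private_colors_le_2_if_in_and_out[OF rf yv \<open>C (y, v) \<in> ?Q\<close>] by blast
    next
      case False
      have "?Q \<subseteq> set [C (y, v)]"
        using False by (auto elim: private_colorE dest: out_private)
      from card_le_length_if_subset_set[OF this] show ?thesis
        by simp
    qed
  next
    case False
    have "?Q \<subseteq> (\<lambda>t. C (t, y)) ` (V - ?T)"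
    proof
      fix c assume c: "c \<in> ?Q"
      then show "c \<in> (\<lambda>t. C (t, y)) ` (V - ?T)"
      proof (cases rule: private_colorE)
        case (out s)
        then show ?thesis
          using out_private False c by blast
      next
        case (into t)
        have "t \<notin> ?T"
          using color_from_private_target[OF rf out_only v, of t y] into False c Y
          by (auto simp: arcs_on_def)
        then show ?thesis
          using into by (auto simp: arcs_on_def)
      qed
    qed
    then show ?thesis ..
  qed
qed

lemma exists_few_private_colors_if_out_only:
  assumes fin: "finite V" and rf: "rainbow_free V C" and out_only: "private_out_only V C v"
    and v: "v \<in> V" and n: "4 \<le> card V" and many: "card V div 2 < card (private_colors V C v)"
  shows "\<exists>y\<in>V. card (private_colors V C y) \<le> card V div 2"
proof -
  let ?T = "private_targets V C v"
  have T: "?T \<subseteq> V" "card (private_colors V C v) \<le> card ?T"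
    using card_private_colors_le_targets[OF fin out_only] by (auto simp: private_targets_def)
  then obtain y where y: "y \<in> ?T"
    using many by fastforce
  have "card (V - ?T) = card V - card ?T"
    using T(1) fin by (simp add: card_Diff_subset finite_subset)
  moreover have "card (private_colors V C y) \<le> 2 \<or> card (private_colors V C y) \<le> card (V - ?T)"
    using private_colors_of_target_le_2_or_from_non_targets[OF rf out_only v y] fin
    by (meson finite_Diff surj_card_le)
  ultimately have "card (private_colors V C y) \<le> card V div 2"
    using T many n by linarith
  then show ?thesis
    using y T(1) by blast
qed

lemma exists_few_private_colors:
  assumes fin: "finite V" and n: "4 \<le> card V" and rf: "rainbow_free V C"
  shows "\<exists>v\<in>V. card (private_colors V C v) \<le> card V div 2"
proof (rule ccontr)
  assume "\<not> ?thesis"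
  then have many: "\<forall>v\<in>V. card V div 2 < card (private_colors V C v)"
    by auto
  obtain v where v: "v \<in> V"
    using n by fastforce
  then have "3 \<le> card (private_colors V C v)"
    using many n by fastforce
  then consider "private_out_only V C v" | "private_out_only V (C \<circ> prod.swap) v"
    using private_out_only_or_swap[OF rf] by blast
  then show False
  proof cases
    case 1
    from exists_few_private_colors_if_out_only[OF fin rf 1 v n] show False
      using many v by fastforce
  next
    case 2
    from exists_few_private_colors_if_out_only[OF fin rainbow_free_swap[OF rf] 2 v n] show False
      using many v by (fastforce simp: private_colors_swap)
  qed
qed

lemma Suc_power2_div_4: "(Suc k)\<^sup>2 div 4 = k\<^sup>2 div 4 + Suc k div 2"
proof (cases "even k")
  case True
  then obtain m where "k = 2 * m"
    by blast
  then show ?thesis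
    by (simp add: power2_eq_square algebra_simps)
next
  case False
  then obtain m where "k = 2 * m + 1"
    using oddE by blast
  then show ?thesis
    by (simp add: power2_eq_square algebra_simps)
qed

text \<open>Delete a vertex with at most \<open>n div 2\<close> private colours and use
  \<open>(n - 1)\<^sup>2 div 4 + n div 2 = n\<^sup>2 div 4\<close>.\<close>
lemma card_colors_le_from_base:
  assumes small: "\<And>W. finite W \<Longrightarrow> card W = m \<Longrightarrow> rainbow_free W C \<Longrightarrow>
      card (C ` arcs_on W) \<le> m\<^sup>2 div 4 + d"
    and m: "3 \<le> m" and fin: "finite V" and card: "m \<le> card V" and rf: "rainbow_free V C"
  shows "card (C ` arcs_on V) \<le> (card V)\<^sup>2 div 4 + d"
  using card fin rf
proof (induction "card V" arbitrary: V rule: nat_induct_at_least)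
  case base
  then show ?case
    using small by simp
next
  case (Suc k)
  obtain v where v: "v \<in> V" "card (private_colors V C v) \<le> card V div 2"
    using exists_few_private_colors[of V C] Suc m by auto
  have "card (C ` arcs_on (V - {v})) \<le> k\<^sup>2 div 4 + d"
    using Suc.hyps(2)[of "V - {v}"] Suc v rainbow_free_subset[of V C "V - {v}"]
    by (metis Diff_subset card_Diff_singleton diff_Suc_1 finite_Diff)
  then show ?case
    using card_colors_le_delete_vertex[OF Suc.prems(1), of C v] v Suc_power2_div_4[of k]
    unfolding Suc.hyps(3)[symmetric] by linarith
qed

lemma image_arcs_on_triangle:
  "x \<noteq> y \<Longrightarrow> y \<noteq> z \<Longrightarrow> x \<noteq> z \<Longrightarrow>
    C ` arcs_on {x, y, z} = {C (x, y), C (y, z), C (z, x)} \<union> {C (x, z), C (z, y), C (y, x)}"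
  by (auto simp: arcs_on_def)

lemma card_triangle_colors_le_2:
  "rainbow_free V C \<Longrightarrow> x \<in> V \<Longrightarrow> y \<in> V \<Longrightarrow> z \<in> V \<Longrightarrow> x \<noteq> y \<Longrightarrow> y \<noteq> z \<Longrightarrow> z \<noteq> x \<Longrightarrow>
    card {C (x, y), C (y, z), C (z, x)} \<le> 2"
  by (drule rainbow_freeD) (auto simp: card_insert_if)

lemma card_colors_le_4_if_card_3:
  assumes "card V = 3" and rf: "rainbow_free V C"
  shows "card (C ` arcs_on V) \<le> 4"
proof -
  obtain x y z where V: "V = {x, y, z}" "x \<noteq> y" "y \<noteq> z" "x \<noteq> z"
    using assms(1) card_3_iff by metis
  have "card {C (x, y), C (y, z), C (z, x)} \<le> 2" "card {C (x, z), C (z, y), C (y, x)} \<le> 2"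
    using card_triangle_colors_le_2[OF rf, of x y z] card_triangle_colors_le_2[OF rf, of x z y] V
    by auto
  then show ?thesis
    unfolding V(1) image_arcs_on_triangle[OF V(2-4)]
    using card_Un_le[of "{C (x, y), C (y, z), C (z, x)}" "{C (x, z), C (z, y), C (y, x)}"]
    by linarith
qed

section \<open>Five vertices\<close>

lemma card_image_le_2:
  assumes "\<And>a b c. a \<in> S \<Longrightarrow> b \<in> S \<Longrightarrow> c \<in> S \<Longrightarrow> a \<noteq> b \<Longrightarrow> b \<noteq> c \<Longrightarrow> a \<noteq> c \<Longrightarrow>
      f a = f b \<or> f b = f c \<or> f c = f a"
  shows "card (f ` S) \<le> 2"
proof (rule ccontr)
  assume "\<not> ?thesis"
  then obtain T where T: "T \<subseteq> f ` S" "card T = 3"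
    by (metis not_less_eq_eq numeral_2_eq_2 numeral_3_eq_3 obtain_subset_with_card_n)
  then obtain p q r where "T = {p, q, r}" "p \<noteq> q" "q \<noteq> r" "p \<noteq> r"
    using card_3_iff by metis
  with T obtain a b c where "a \<in> S" "b \<in> S" "c \<in> S" "f a = p" "f b = q" "f c = r"
    by (metis image_iff insert_subset)
  then show False
    using assms[of a b c] \<open>p \<noteq> q\<close> \<open>q \<noteq> r\<close> \<open>p \<noteq> r\<close> by auto
qed

text \<open>Every arc not at \<open>v\<close> has the colour of the arc from its head to \<open>v\<close>, and these colours
  take at most two values because the directed triangles avoiding \<open>v\<close> are not rainbow.\<close>
lemma card_colors_le_if_all_targets:
  assumes fin: "finite V" and rf: "rainbow_free V C" and out_only: "private_out_only V C v"
    and v: "v \<in> V" and all: "private_targets V C v = V - {v}"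
  shows "card (C ` arcs_on V) \<le> card V + 1"
proof -
  let ?X = "V - {v}" and ?h = "\<lambda>x. C (x, v)"
  have head: "C (x, y) = ?h y" if "x \<in> ?X" "y \<in> ?X" "x \<noteq> y" for x y
    using color_from_private_target[OF rf out_only v, of x y] that all by auto
  have "C ` arcs_on V \<subseteq> (\<lambda>x. C (v, x)) ` ?X \<union> ?h ` ?X"
    using head by (auto simp: arcs_on_def)
  then have "card (C ` arcs_on V) \<le> card ((\<lambda>x. C (v, x)) ` ?X) + card (?h ` ?X)"
    by (meson card_Un_le card_mono fin finite_Diff finite_Un finite_imageI order_trans)
  moreover have "card ((\<lambda>x. C (v, x)) ` ?X) \<le> card V - 1"
    using card_image_le[of ?X] fin v by (simp add: card_Diff_singleton)
  moreover have "card (?h ` ?X) \<le> 2"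
  proof (rule card_image_le_2)
    fix a b c assume "a \<in> ?X" "b \<in> ?X" "c \<in> ?X" "a \<noteq> b" "b \<noteq> c" "a \<noteq> c"
    then show "?h a = ?h b \<or> ?h b = ?h c \<or> ?h c = ?h a"
      using rainbow_freeD[OF rf, of a b c] head by auto
  qed
  moreover have "card V \<noteq> 0"
    using fin v by auto
  ultimately show ?thesis
    by linarith
qed

lemma colors_subset_if_head_determined:
  assumes head: "\<And>x y. x \<in> W - {z} \<Longrightarrow> y \<in> W \<Longrightarrow> y \<noteq> x \<Longrightarrow> C (x, y) = \<phi> y"
  shows "C ` arcs_on W \<subseteq> \<phi> ` W \<union> (\<lambda>x. C (z, x)) ` (W - {z})"
proof
  fix c assume "c \<in> C ` arcs_on W"
  then obtain a b where "a \<in> W" "b \<in> W" "a \<noteq> b" "c = C (a, b)"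
    by (auto simp: arcs_on_def)
  then show "c \<in> \<phi> ` W \<union> (\<lambda>x. C (z, x)) ` (W - {z})"
    using head[of a b] by (cases "a = z") auto
qed

text \<open>Via the triangle \<open>z \<rightarrow> x \<rightarrow> y \<rightarrow> z\<close>, whose other two sides have colours \<open>\<phi> y\<close> and \<open>\<phi> z\<close>.\<close>
lemma head_color_forced:
  assumes rf: "rainbow_free W C" and z: "z \<in> W"
    and head: "\<And>x y. x \<in> W - {z} \<Longrightarrow> y \<in> W \<Longrightarrow> y \<noteq> x \<Longrightarrow> C (x, y) = \<phi> y"
    and x: "x \<in> W - {z}" "C (z, x) \<notin> \<phi> ` W" and y: "y \<in> W - {z}" "y \<noteq> x"
  shows "\<phi> y = \<phi> z"
proof -
  have "C (z, x) \<noteq> C (x, y)" "C (y, z) \<noteq> C (z, x)"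
    using head[of x y] head[of y z] x y z by auto
  moreover have "C (x, y) = \<phi> y" "C (y, z) = \<phi> z"
    using head x y z by auto
  ultimately show ?thesis
    using rainbow_freeD[OF rf z, of x y] x y by auto
qed

lemma card_colors_le_card_if_head_determined:
  assumes rf: "rainbow_free W C" and fin: "finite W" and W: "3 \<le> card W" and z: "z \<in> W"
    and head: "\<And>x y. x \<in> W - {z} \<Longrightarrow> y \<in> W \<Longrightarrow> y \<noteq> x \<Longrightarrow> C (x, y) = \<phi> y"
  shows "card (C ` arcs_on W) \<le> card W"
proof -
  let ?X = "W - {z}" and ?f = "\<lambda>x. C (z, x)"
  have colors: "C ` arcs_on W \<subseteq> \<phi> ` W \<union> ?f ` ?X"
    using head by (rule colors_subset_if_head_determined)
  have forced: "\<phi> y = \<phi> z" if "x \<in> ?X" "?f x \<notin> \<phi> ` W" "y \<in> ?X" "y \<noteq> x" for x y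
    using rf z head that by (rule head_color_forced)
  have "card (\<phi> ` ?X) \<le> 2"
  proof (rule card_image_le_2)
    fix a b c assume "a \<in> ?X" "b \<in> ?X" "c \<in> ?X" "a \<noteq> b" "b \<noteq> c" "a \<noteq> c"
    then show "\<phi> a = \<phi> b \<or> \<phi> b = \<phi> c \<or> \<phi> c = \<phi> a"
      using rainbow_freeD[OF rf, of a b c] head by auto
  qed
  moreover have "\<phi> ` W = insert (\<phi> z) (\<phi> ` ?X)"
    using z by blast
  ultimately have card_phi: "card (\<phi> ` W) \<le> 3"
    using fin by (simp add: card_insert_if)
  show ?thesis
  proof (cases "?f ` ?X \<subseteq> \<phi> ` W")
    case True
    then have "C ` arcs_on W \<subseteq> \<phi> ` W"
      using colors by (simp add: Un_absorb2)
    then have "card (C ` arcs_on W) \<le> card (\<phi> ` W)"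
      using fin by (simp add: card_mono)
    then show ?thesis
      using card_phi W by linarith
  next
    case False
    then obtain x where x: "x \<in> ?X" "?f x \<notin> \<phi> ` W"
      by blast
    show ?thesis
    proof (cases "?f ` (?X - {x}) \<subseteq> \<phi> ` W")
      case True
      have "\<phi> u \<in> {\<phi> z, \<phi> x}" if "u \<in> W" for u
        using forced[OF x, of u] that by (cases "u = z \<or> u = x") auto
      then have phi: "\<phi> ` W \<subseteq> {\<phi> z, \<phi> x}"
        by (rule image_subsetI)
      have "?f ` ?X = insert (?f x) (?f ` (?X - {x}))"
        using x(1) by blast
      then have "\<phi> ` W \<union> ?f ` ?X \<subseteq> insert (?f x) (\<phi> ` W)"
        using True by auto
      also have "\<dots> \<subseteq> set [\<phi> z, \<phi> x, ?f x]"
        using phi by auto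
      finally have "C ` arcs_on W \<subseteq> set [\<phi> z, \<phi> x, ?f x]"
        using colors by (rule subset_trans[rotated])
      from card_le_length_if_subset_set[OF this] show ?thesis
        using W by simp
    next
      case False
      then obtain y where y: "y \<in> ?X" "y \<noteq> x" "?f y \<notin> \<phi> ` W"
        by blast
      have "\<phi> u = \<phi> z" if "u \<in> W" for u
        using forced[OF x, of u] forced[OF y(1,3) x(1)] y(2) that by (cases "u = x") auto
      then have "\<phi> ` W \<union> ?f ` ?X \<subseteq> insert (\<phi> z) (?f ` ?X)"
        by auto
      then have "C ` arcs_on W \<subseteq> insert (\<phi> z) (?f ` ?X)"
        using colors by (rule subset_trans[rotated])
      then have "card (C ` arcs_on W) \<le> card (insert (\<phi> z) (?f ` ?X))"
        using fin by (simp add: card_mono)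
      also have "\<dots> \<le> Suc (card ?X)"
        using fin card_image_le[of ?X ?f] by (simp add: card_insert_if)
      also have "\<dots> = card W"
        using card.remove[OF fin z] by simp
      finally show ?thesis .
    qed
  qed
qed

lemma card_colors_le_if_many_private_out_only:
  assumes fin: "finite V" and rf: "rainbow_free V C" and out_only: "private_out_only V C v"
    and v: "v \<in> V" and many: "3 \<le> card (private_colors V C v)"
    and n: "card V = 4 \<or> card V = 5"
  shows "card (C ` arcs_on V) \<le> 2 * card V - 3"
proof -
  let ?T = "private_targets V C v"
  have T: "?T \<subseteq> V - {v}" "3 \<le> card ?T"
    using card_private_colors_le_targets[OF fin out_only] many
    unfolding private_targets_def by auto
  have card_V': "card (V - {v}) = card V - 1"
    using v by (simp add: card_Diff_singleton)
  show ?thesis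
  proof (cases "?T = V - {v}")
    case True
    from card_colors_le_if_all_targets[OF fin rf out_only v True] show ?thesis
      using n by linarith
  next
    case False
    then have "card ?T < card (V - {v})"
      using T(1) fin by (meson finite_Diff psubsetI psubset_card_mono)
    then have n5: "card V = 5" and T3: "card ?T = 3"
      using T(2) card_V' n by auto
    then have "card (V - {v} - ?T) = 1"
      using T(1) fin card_V' by (simp add: card_Diff_subset finite_subset)
    then obtain z where z: "V - {v} - ?T = {z}"
      using card_1_singletonE by blast
    have "card (C ` arcs_on (V - {v})) \<le> card (V - {v})"
    proof (rule card_colors_le_card_if_head_determined[where z = z and \<phi> = "\<lambda>y. C (y, v)"])
      show "rainbow_free (V - {v}) C"
        using rainbow_free_subset[OF rf] by blast
      show "finite (V - {v})" "3 \<le> card (V - {v})" "z \<in> V - {v}"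
        using fin card_V' n5 z by auto
    next
      fix x y assume "x \<in> V - {v} - {z}" "y \<in> V - {v}" "y \<noteq> x"
      moreover have "x \<in> ?T"
        using z \<open>x \<in> V - {v} - {z}\<close> by blast
      ultimately show "C (x, y) = C (y, v)"
        using color_from_private_target[OF rf out_only v, of x y] by blast
    qed
    then show ?thesis
      using card_colors_le_delete_vertex[OF fin, of C v] card_V' n5 T3
        card_private_colors_le_targets[OF fin out_only] by linarith
  qed
qed

lemma card_colors_le_if_many_private:
  assumes fin: "finite V" and rf: "rainbow_free V C" and v: "v \<in> V"
    and many: "3 \<le> card (private_colors V C v)" and n: "card V = 4 \<or> card V = 5"
  shows "card (C ` arcs_on V) \<le> 2 * card V - 3"
  using private_out_only_or_swap[OF rf many]
proof
  assume "private_out_only V C v"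
  from card_colors_le_if_many_private_out_only[OF fin rf this v many n] show ?thesis .
next
  assume out_only: "private_out_only V (C \<circ> prod.swap) v"
  have "3 \<le> card (private_colors V (C \<circ> prod.swap) v)"
    using many by (simp only: private_colors_swap)
  from card_colors_le_if_many_private_out_only[OF fin rainbow_free_swap[OF rf] out_only v this n]
  show ?thesis
    by (simp only: image_swap_arcs_on)
qed

lemma card_private_colors_le_2_if_many_colors:
  assumes fin: "finite V" and rf: "rainbow_free V C" and v: "v \<in> V"
    and n: "card V = 4 \<or> card V = 5" and many: "2 * card V - 2 \<le> card (C ` arcs_on V)"
  shows "card (private_colors V C v) \<le> 2"
  using card_colors_le_if_many_private[OF fin rf v _ n] many n by fastforce

text \<open>Deleting the two other vertices one after the other loses at most two colours each time.\<close>
lemma card_colors_ge_4_on_triples_if_8_colors: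
  assumes fin: "finite V" and five: "card V = 5" and rf: "rainbow_free V C"
    and many: "8 \<le> card (C ` arcs_on V)" and W: "W \<subseteq> V" "card W = 3"
  shows "4 \<le> card (C ` arcs_on W)"
proof -
  have "card (V - W) = 2"
    using W five fin by (simp add: card_Diff_subset finite_subset)
  then obtain u w where uw: "V - W = {u, w}" "u \<noteq> w"
    by (meson card_2_iff)
  let ?V' = "V - {u}"
  have u: "u \<in> V" and w: "w \<in> ?V'"
    using uw by auto
  have card_V': "card ?V' = 4"
    using u five by (simp add: card_Diff_singleton)
  have "card (private_colors V C u) \<le> 2"
    using card_private_colors_le_2_if_many_colors[OF fin rf u] five many by simp
  then have many': "6 \<le> card (C ` arcs_on ?V')"
    using card_colors_le_delete_vertex[OF fin, of C u] many by linarith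
  have "card (private_colors ?V' C w) \<le> 2"
    using card_private_colors_le_2_if_many_colors[OF _ rainbow_free_subset[OF rf] w]
      fin card_V' many' by simp
  then have "4 \<le> card (C ` arcs_on (?V' - {w}))"
    using card_colors_le_delete_vertex[of ?V' C w] fin many' by simp
  moreover have "?V' - {w} = W"
    using uw W by auto
  ultimately show ?thesis
    by simp
qed

text \<open>Each of the two directed triangles on \<open>{x, y, z}\<close> has at most two colours, so four colours
  on \<open>{x, y, z}\<close> force their colour sets to be disjoint; \<open>x \<rightarrow> y\<close> lies on one and \<open>x \<rightarrow> z\<close>
  on the other.\<close>
lemma inj_on_out_colors_if_8_colors:
  assumes fin: "finite V" and five: "card V = 5" and rf: "rainbow_free V C"
    and many: "8 \<le> card (C ` arcs_on V)" and x: "x \<in> V"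
  shows "inj_on (\<lambda>y. C (x, y)) (V - {x})"
proof (rule inj_onI, rule ccontr)
  fix y z assume yz: "y \<in> V - {x}" "z \<in> V - {x}" "C (x, y) = C (x, z)" "y \<noteq> z"
  let ?A = "{C (x, y), C (y, z), C (z, x)}" and ?B = "{C (x, z), C (z, y), C (y, x)}"
  have distinct: "x \<noteq> y" "y \<noteq> z" "x \<noteq> z"
    using yz by auto
  have "{x, y, z} \<subseteq> V" "card {x, y, z} = 3"
    using x yz by auto
  from card_colors_ge_4_on_triples_if_8_colors[OF fin five rf many this]
  have "4 \<le> card (?A \<union> ?B)"
    unfolding image_arcs_on_triangle[OF distinct] .
  moreover have "card ?A \<le> 2" "card ?B \<le> 2"
    using card_triangle_colors_le_2[OF rf, of x y z] card_triangle_colors_le_2[OF rf, of x z y] x yz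
    by auto
  moreover have "card (?A \<union> ?B) \<le> card ?A + card ?B - card (?A \<inter> ?B)"
    using card_Un_Int[of ?A ?B] by simp
  moreover have "?A \<inter> ?B \<noteq> {}"
    using yz by auto
  then have "card (?A \<inter> ?B) \<noteq> 0"
    by simp
  ultimately show False
    by linarith
qed

definition mono_2paths :: "'a set \<Rightarrow> ('a \<times> 'a \<Rightarrow> 'c) \<Rightarrow> (('a \<times> 'a) \<times> 'a) set" where
  "mono_2paths V C = {((x, y), z). (x, y) \<in> arcs_on V \<and> z \<in> V - {x, y} \<and> C (x, y) = C (y, z)}"

lemma finite_mono_2paths: "finite V \<Longrightarrow> finite (mono_2paths V C)"
  by (rule finite_subset[of _ "arcs_on V \<times> V"]) (auto simp: mono_2paths_def finite_arcs_on)

text \<open>Each of the \<open>|A| (n - 2)\<close> triangles \<open>x \<rightarrow> y \<rightarrow> z \<rightarrow> x\<close>, counted with a distinguished arc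
  \<open>x \<rightarrow> y\<close>, contains a monochromatic 2-path starting at one of its three arcs, so it is a
  rotation of an element of \<open>mono_2paths V C\<close>.\<close>
lemma card_mono_2paths_ge:
  assumes fin: "finite V" and rf: "rainbow_free V C"
  shows "card (arcs_on V) * (card V - 2) \<le> 3 * card (mono_2paths V C)"
proof -
  let ?A = "arcs_on V" and ?M = "mono_2paths V C"
  define T where "T = Sigma ?A (\<lambda>p. V - {fst p, snd p})"
  define rot where "rot = (\<lambda>((a, b), c). ((c, a), b) :: ('a \<times> 'a) \<times> 'a)"
  have "card T = (\<Sum>p\<in>?A. card (V - {fst p, snd p}))"
    unfolding T_def using fin finite_arcs_on by (intro card_SigmaI) auto
  also have "\<dots> = (\<Sum>p\<in>?A. card V - 2)"
    by (rule sum.cong) (auto simp: arcs_on_def card_Diff_subset)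
  finally have card_T: "card T = card ?A * (card V - 2)"
    by simp
  have "T \<subseteq> ?M \<union> rot ` ?M \<union> rot ` rot ` ?M"
  proof
    fix t assume t: "t \<in> T"
    obtain x y z where t_eq: "t = ((x, y), z)"
      by (metis prod.collapse)
    have xyz: "x \<in> V" "y \<in> V" "z \<in> V" "x \<noteq> y" "z \<noteq> x" "z \<noteq> y"
      using t by (auto simp: T_def arcs_on_def t_eq)
    have "((x, y), z) \<in> ?M \<or> ((y, z), x) \<in> ?M \<or> ((z, x), y) \<in> ?M"
      using rainbow_freeD[OF rf xyz(1-3)] xyz by (auto simp: mono_2paths_def arcs_on_def)
    moreover have "rot ((y, z), x) = t" "rot (rot ((z, x), y)) = t"
      by (simp_all add: rot_def t_eq)
    ultimately show "t \<in> ?M \<union> rot ` ?M \<union> rot ` rot ` ?M"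
      unfolding t_eq by (metis UnI1 UnI2 image_eqI t_eq)
  qed
  then have "card T \<le> card (?M \<union> rot ` ?M \<union> rot ` rot ` ?M)"
    using fin by (intro card_mono) (auto simp: finite_mono_2paths)
  also have "\<dots> \<le> card ?M + card (rot ` ?M) + card (rot ` rot ` ?M)"
    by (meson add_le_mono card_Un_le le_trans order_refl)
  also have "\<dots> \<le> 3 * card ?M"
    using card_image_le[OF finite_mono_2paths[OF fin], of rot C]
      card_image_le[OF finite_imageI[OF finite_mono_2paths[OF fin]], of rot rot C] by linarith
  finally show ?thesis
    using card_T by simp
qed

lemma inj_on_fst_mono_2paths:
  assumes inj: "\<forall>x\<in>V. inj_on (\<lambda>y. C (x, y)) (V - {x})"
  shows "inj_on fst (mono_2paths V C)"
proof (rule inj_onI)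
  fix s t assume s: "s \<in> mono_2paths V C" and t: "t \<in> mono_2paths V C" and "fst s = fst t"
  then obtain x y z z' where s_eq: "s = ((x, y), z)" and t_eq: "t = ((x, y), z')"
    by (metis fst_conv prod.collapse)
  have "y \<in> V" "z \<in> V - {y}" "z' \<in> V - {y}" "C (y, z) = C (y, z')"
    using s t by (auto simp: mono_2paths_def arcs_on_def s_eq t_eq)
  then have "z = z'"
    using inj by (meson inj_onD)
  then show "s = t"
    by (simp add: s_eq t_eq)
qed

text \<open>With distinct colours on the out-arcs of each vertex, every arc starts at most one
  monochromatic 2-path; the count above shows that for \<open>n \<ge> 5\<close> it starts one.\<close>
lemma exists_mono_successor:
  assumes fin: "finite V" and n: "5 \<le> card V" and rf: "rainbow_free V C"
    and inj: "\<forall>x\<in>V. inj_on (\<lambda>y. C (x, y)) (V - {x})" and xy: "(x, y) \<in> arcs_on V"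
  shows "\<exists>z. ((x, y), z) \<in> mono_2paths V C"
proof -
  let ?A = "arcs_on V" and ?M = "mono_2paths V C"
  have "card ?A * 3 \<le> card ?A * (card V - 2)"
    using n by (intro mult_le_mono2) linarith
  then have "card ?A \<le> card (fst ` ?M)"
    using card_mono_2paths_ge[OF fin rf] card_image[OF inj_on_fst_mono_2paths[OF inj]] by linarith
  moreover have "fst ` ?M \<subseteq> ?A"
    by (auto simp: mono_2paths_def)
  ultimately have "fst ` ?M = ?A"
    using card_seteq[OF finite_arcs_on[OF fin]] by blast
  then show ?thesis
    using xy by force
qed

text \<open>Following monochromatic successors from an arc gives a monochromatic walk
  \<open>x \<rightarrow> y \<rightarrow> z \<rightarrow> w\<close> whose three arcs are distinct.\<close>
lemma card_color_class_ge_3: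
  assumes fin: "finite V" and n: "5 \<le> card V" and rf: "rainbow_free V C"
    and inj: "\<forall>x\<in>V. inj_on (\<lambda>y. C (x, y)) (V - {x})" and xy: "(x, y) \<in> arcs_on V"
  shows "3 \<le> card {e \<in> arcs_on V. C e = C (x, y)}"
proof -
  obtain z where z: "((x, y), z) \<in> mono_2paths V C"
    using exists_mono_successor[OF fin n rf inj xy] by blast
  then have yz: "(y, z) \<in> arcs_on V"
    by (auto simp: mono_2paths_def arcs_on_def)
  obtain w where w: "((y, z), w) \<in> mono_2paths V C"
    using exists_mono_successor[OF fin n rf inj yz] by blast
  have walk: "x \<noteq> y" "y \<noteq> z" "z \<noteq> x" "(z, w) \<in> arcs_on V" "C (y, z) = C (x, y)"
      "C (z, w) = C (x, y)"
    using xy z w by (auto simp: mono_2paths_def arcs_on_def)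
  then have "{(x, y), (y, z), (z, w)} \<subseteq> {e \<in> arcs_on V. C e = C (x, y)}"
    using xy yz by simp
  moreover have "card {(x, y), (y, z), (z, w)} = 3"
    using walk by simp
  ultimately show ?thesis
    by (metis (no_types, lifting) card_mono finite_arcs_on[OF fin] finite_subset mem_Collect_eq
        subsetI)
qed

lemma three_mul_card_colors_le:
  assumes fin: "finite V" and n: "5 \<le> card V" and rf: "rainbow_free V C"
    and inj: "\<forall>x\<in>V. inj_on (\<lambda>y. C (x, y)) (V - {x})"
  shows "3 * card (C ` arcs_on V) \<le> card (arcs_on V)"
proof -
  let ?A = "arcs_on V"
  have "3 * card (C ` ?A) = (\<Sum>c\<in>C ` ?A. 3)"
    by simp
  also have "\<dots> \<le> (\<Sum>c\<in>C ` ?A. card {e \<in> ?A. C e = c})"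
    using card_color_class_ge_3[OF fin n rf inj] by (intro sum_mono) auto
  also have "\<dots> = card ?A"
    unfolding card_eq_sum by (rule sum.image_gen[symmetric, OF finite_arcs_on[OF fin]])
  finally show ?thesis .
qed

lemma card_colors_le_7_if_card_5:
  assumes fin: "finite V" and five: "card V = 5" and rf: "rainbow_free V C"
  shows "card (C ` arcs_on V) \<le> 7"
proof (rule ccontr)
  assume "\<not> ?thesis"
  then have many: "8 \<le> card (C ` arcs_on V)"
    by simp
  have "3 * card (C ` arcs_on V) \<le> card (arcs_on V)"
    using three_mul_card_colors_le[OF fin _ rf] inj_on_out_colors_if_8_colors[OF fin five rf many]
      five by simp
  moreover have "card (arcs_on V) = 20"
    using card_arcs_on[OF fin] five by simp
  ultimately show False
    using many by linarith
qed

section \<open>The extremal number\<close>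

lemma card_colors_le_rainbow_free:
  assumes "finite V" "3 \<le> card V" "rainbow_free V C"
  shows "card (C ` arcs_on V) \<le> (card V)\<^sup>2 div 4 + 2"
  using assms
  by (intro card_colors_le_from_base[where m = 3]) (simp_all add: card_colors_le_4_if_card_3)

lemma card_colors_le_rainbow_free_ge_5:
  assumes "finite V" "5 \<le> card V" "rainbow_free V C"
  shows "card (C ` arcs_on V) \<le> (card V)\<^sup>2 div 4 + 1"
  using assms
  by (intro card_colors_le_from_base[where m = 5]) (simp_all add: card_colors_le_7_if_card_5)

lemma arcs_eq_arcs_on: "arcs n = arcs_on {..<n}"
  by (auto simp: arcs_def arcs_on_def)

lemma has_rainbow_triangle_iff: "has_rainbow_triangle n C \<longleftrightarrow> \<not> rainbow_free {..<n} C"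
  unfolding has_rainbow_triangle_def rainbow_free_def by auto

lemma num_colors_le_if_no_rainbow_triangle:
  assumes "3 \<le> n" and "\<not> has_rainbow_triangle n C"
  shows "num_colors n C \<le> (if n = 3 \<or> n = 4 then n\<^sup>2 div 4 + 2 else n\<^sup>2 div 4 + 1)"
proof -
  have "rainbow_free {..<n} C"
    using assms(2) by (simp add: has_rainbow_triangle_iff)
  then show ?thesis
    using card_colors_le_rainbow_free[of "{..<n}" C] card_colors_le_rainbow_free_ge_5[of "{..<n}" C]
      assms(1) by (auto simp: num_colors_def arcs_eq_arcs_on)
qed

definition bipartite_coloring :: "nat \<Rightarrow> nat \<times> nat \<Rightarrow> nat" where
  "bipartite_coloring n = (\<lambda>(x, y). if x < n div 2 \<and> n div 2 \<le> y then x * n + y + 1 else 0)"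

text \<open>A directed triangle has at most one arc from \<open>{..<n div 2}\<close> to \<open>{n div 2..}\<close>, so at least
  two of its arcs have colour \<open>0\<close>.\<close>
lemma not_has_rainbow_triangle_bipartite: "\<not> has_rainbow_triangle n (bipartite_coloring n)"
  unfolding has_rainbow_triangle_def bipartite_coloring_def by auto

lemma div_2_mul_sub_div_2: "(n::nat) div 2 * (n - n div 2) = n\<^sup>2 div 4"
proof (cases "even n")
  case True
  then obtain m where "n = 2 * m"
    by blast
  then show ?thesis
    by (simp add: power2_eq_square)
next
  case False
  then obtain m where "n = 2 * m + 1"
    using oddE by blast
  then show ?thesis
    by (simp add: power2_eq_square algebra_simps)
qed

lemma num_colors_bipartite_coloring:
  assumes "2 \<le> n"
  shows "n\<^sup>2 div 4 + 1 \<le> num_colors n (bipartite_coloring n)"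
proof -
  let ?S = "{..<n div 2} \<times> {n div 2..<n}" and ?f = "\<lambda>(x, y). x * n + y + 1"
  have "inj_on ?f ?S"
  proof (rule inj_onI, clarsimp)
    fix x y x' y' assume "y < n" "y' < n" "x * n + y = x' * n + y'"
    then show "x = x' \<and> y = y'"
      by (metis add.commute div_mult_self1 div_less less_nat_zero_code mod_mult_self1 mod_less
          add_0 nat_mult_eq_cancel1 not_gr_zero)
  qed
  then have "card (?f ` ?S) = n\<^sup>2 div 4"
    by (simp add: card_image card_cartesian_product div_2_mul_sub_div_2)
  then have "card (insert 0 (?f ` ?S)) = n\<^sup>2 div 4 + 1"
    by (subst card_insert_disjoint) auto
  moreover have "insert 0 (?f ` ?S) \<subseteq> bipartite_coloring n ` arcs n"
  proof
    fix c assume "c \<in> insert 0 (?f ` ?S)"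
    then consider "c = 0" | x y where "x < n div 2" "n div 2 \<le> y" "y < n" "c = x * n + y + 1"
      by auto
    then show "c \<in> bipartite_coloring n ` arcs n"
    proof cases
      case 1
      have "(1, 0) \<in> arcs n" "bipartite_coloring n (1, 0) = 0"
        using assms by (auto simp: arcs_def bipartite_coloring_def)
      then show ?thesis
        using 1 by (metis image_eqI)
    next
      case 2
      then have "(x, y) \<in> arcs n" "bipartite_coloring n (x, y) = c"
        by (auto simp: arcs_def bipartite_coloring_def)
      then show ?thesis
        by (metis image_eqI)
    qed
  qed
  then have "card (insert 0 (?f ` ?S)) \<le> num_colors n (bipartite_coloring n)"
    unfolding num_colors_def arcs_eq_arcs_on by (intro card_mono) (auto simp: finite_arcs_on)
  ultimately show ?thesis
    by simp
qed

definition coloring_3 :: "nat \<times> nat \<Rightarrow> nat" where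
  "coloring_3 e =
    (if e = (0, 1) \<or> e = (1, 2) then 0 else if e = (2, 0) then 1
     else if e = (0, 2) \<or> e = (2, 1) then 2 else 3)"

definition coloring_4 :: "nat \<times> nat \<Rightarrow> nat" where
  "coloring_4 e =
    (if e = (0, 1) \<or> e = (1, 3) \<or> e = (2, 0) \<or> e = (3, 2) then 0
     else if e = (0, 2) \<or> e = (1, 0) \<or> e = (2, 3) \<or> e = (3, 1) then 1
     else if e = (0, 3) then 2 else if e = (1, 2) then 3 else if e = (2, 1) then 4 else 5)"

lemma coloring_3: "\<not> has_rainbow_triangle 3 coloring_3" "num_colors 3 coloring_3 = 4"
proof -
  have V: "{..<3} = {0, 1, 2 :: nat}"
    by auto
  have A: "arcs_on {0, 1, 2 :: nat} = {(0, 1), (0, 2), (1, 0), (1, 2), (2, 0), (2, 1)}"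
    by (auto simp: arcs_on_def)
  show "\<not> has_rainbow_triangle 3 coloring_3"
    unfolding has_rainbow_triangle_iff V rainbow_free_def by (simp add: coloring_3_def)
  show "num_colors 3 coloring_3 = 4"
    unfolding num_colors_def arcs_eq_arcs_on V A by (simp add: coloring_3_def)
qed

lemma coloring_4: "\<not> has_rainbow_triangle 4 coloring_4" "num_colors 4 coloring_4 = 6"
proof -
  have V: "{..<4} = {0, 1, 2, 3 :: nat}"
    by auto
  have A: "arcs_on {0, 1, 2, 3 :: nat} =
      {(0, 1), (0, 2), (0, 3), (1, 0), (1, 2), (1, 3),
       (2, 0), (2, 1), (2, 3), (3, 0), (3, 1), (3, 2)}"
    by (auto simp: arcs_on_def)
  show "\<not> has_rainbow_triangle 4 coloring_4"
    unfolding has_rainbow_triangle_iff V rainbow_free_def by (simp add: coloring_4_def)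
  show "num_colors 4 coloring_4 = 6"
    unfolding num_colors_def arcs_eq_arcs_on V A by (simp add: coloring_4_def)
qed

lemma exists_coloring_without_rainbow_triangle:
  assumes "3 \<le> n"
  obtains C where "\<not> has_rainbow_triangle n C"
    and "(if n = 3 \<or> n = 4 then n\<^sup>2 div 4 + 2 else n\<^sup>2 div 4 + 1) \<le> num_colors n C"
proof -
  consider "n = 3" | "n = 4" | "n \<noteq> 3" "n \<noteq> 4"
    by blast
  then show ?thesis
  proof cases
    case 1
    then show ?thesis
      using that[of coloring_3] coloring_3 by simp
  next
    case 2
    then show ?thesis
      using that[of coloring_4] coloring_4 by simp
  next
    case 3
    then show ?thesis
      using that[of "bipartite_coloring n"] not_has_rainbow_triangle_bipartite
        num_colors_bipartite_coloring assms by simp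
  qed
qed

lemma f_rainbow_eqI:
  assumes upper: "\<And>C. \<not> has_rainbow_triangle n C \<Longrightarrow> num_colors n C \<le> M"
    and lower: "\<not> has_rainbow_triangle n C\<^sub>0" "M \<le> num_colors n C\<^sub>0"
  shows "f_rainbow n = M + 1"
  unfolding f_rainbow_def
proof (rule Least_equality)
  show "\<forall>C. M + 1 \<le> num_colors n C \<longrightarrow> has_rainbow_triangle n C"
  proof (intro allI impI)
    fix C assume "M + 1 \<le> num_colors n C"
    then show "has_rainbow_triangle n C"
      using upper[of C] by linarith
  qed
next
  fix k assume k: "\<forall>C. k \<le> num_colors n C \<longrightarrow> has_rainbow_triangle n C"
  show "M + 1 \<le> k"
  proof (rule ccontr)
    assume "\<not> M + 1 \<le> k"
    then have "k \<le> num_colors n C\<^sub>0"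
      using lower(2) by linarith
    then show False
      using k lower(1) by blast
  qed
qed

theorem theorem1:
  fixes n :: nat
  assumes "n \<ge> 3"
  shows "f_rainbow n = (if n = 3 \<or> n = 4 then n\<^sup>2 div 4 + 3 else n\<^sup>2 div 4 + 2)"
proof -
  obtain C\<^sub>0 where "\<not> has_rainbow_triangle n C\<^sub>0"
    and "(if n = 3 \<or> n = 4 then n\<^sup>2 div 4 + 2 else n\<^sup>2 div 4 + 1) \<le> num_colors n C\<^sub>0"
    using exists_coloring_without_rainbow_triangle[OF assms] .
  from f_rainbow_eqI[OF num_colors_le_if_no_rainbow_triangle[OF assms] this] show ?thesis
    by simp
qed

end
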